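(* Let $q\ge1$, $(a,q)=1$, $X\ge2$ and $1\le h\le X$. Then $$J_{1,a,q}(X,h):=\int_0^h\Big|\sum_{n\le x}F(n)e^{-n/X}\Big|^2dx\ll H_{a,q}(h)+\frac{h}{\varphi^2(q)},$$ where $F(n)=\Lambda(n)\delta(n)-\frac{1}{\varphi(q)}+\frac{\widetilde\chi(a)}{\varphi(q)}n^{\widetilde\beta-1}$ and $H_{a,q}(y)=\int_0^y\Big(\psi(t,q,a)-\frac{t}{\varphi(q)}+\frac{\widetilde\chi(a)}{\varphi(q)}\frac{t^{\widetilde\beta}}{\widetilde\beta}\Big)^2dt$.
   Context: $\Lambda$ is the von Mangoldt function, $\varphi$ Euler's totient, $\delta(n)=1$ if $n\equiv a\pmod q$ and $0$ otherwise, $\psi(t,q,a)=\sum_{m\le t,\ m\equiv a (q)}\Lambda(m)$. $\widetilde\beta$ is the possible Siegel (exceptional) zero for modulus $q$, a real zero of $L(s,\widetilde\chi)$ for the exceptional real character $\widetilde\chi$ mod $q$ (at most one exists; if none, the terms involving $\widetilde\beta$ are absent). *)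

theory Defs
  imports "HOL-Analysis.Analysis" "HOL-Number_Theory.Number_Theory"
begin

definition dirichlet_char :: "nat \<Rightarrow> (nat \<Rightarrow> real) \<Rightarrow> bool" where
  "dirichlet_char q chi \<longleftrightarrow> q \<ge> 1 \<and> chi 1 = 1 \<and>
     (\<forall>m n. chi (m * n) = chi m * chi n) \<and>
     (\<forall>n. chi (n + q) = chi n) \<and>
     (\<forall>n. chi n = 0 \<longleftrightarrow> \<not> coprime n q)"

definition principal_char :: "nat \<Rightarrow> nat \<Rightarrow> real" where
  "principal_char q n = (if coprime n q then 1 else 0)"

text \<open>For a nonprincipal character and real 0 < s < 1 the Dirichlet series converges
  (conditionally) to L(s,chi); a real zero in (0,1) is a point where this limit is 0.\<close>
definition L_real_zero :: "(nat \<Rightarrow> real) \<Rightarrow> real \<Rightarrow> bool" where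
  "L_real_zero chi s \<longleftrightarrow> 0 < s \<and> s < 1 \<and>
     (\<lambda>N. \<Sum>n=1..N. chi n * real n powr (-s)) \<longlonglongrightarrow> 0"

definition siegel_zero :: "real \<Rightarrow> nat \<Rightarrow> (nat \<Rightarrow> real) \<Rightarrow> real \<Rightarrow> bool" where
  "siegel_zero c q chi \<beta> \<longleftrightarrow> dirichlet_char q chi \<and> chi \<noteq> principal_char q \<and>
     L_real_zero chi \<beta> \<and> \<beta> \<ge> 1 - c / ln (real q)"

definition delta_ap :: "nat \<Rightarrow> nat \<Rightarrow> nat \<Rightarrow> real" where
  "delta_ap q a n = (if [n = a] (mod q) then 1 else 0)"

definition psi_ap :: "real \<Rightarrow> nat \<Rightarrow> nat \<Rightarrow> real" where
  "psi_ap t q a = (\<Sum>m\<in>{m. 1 \<le> m \<and> real m \<le> t \<and> [m = a] (mod q)}. mangoldt m)"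

text \<open>e stands for chi~(a) (and e = 0 when there is no exceptional zero), b for beta~.\<close>
definition F_fun :: "nat \<Rightarrow> nat \<Rightarrow> real \<Rightarrow> real \<Rightarrow> nat \<Rightarrow> real" where
  "F_fun q a e b n = mangoldt n * delta_ap q a n - 1 / real (totient q)
     + e / real (totient q) * real n powr (b - 1)"

definition H_fun :: "nat \<Rightarrow> nat \<Rightarrow> real \<Rightarrow> real \<Rightarrow> real \<Rightarrow> real" where
  "H_fun q a e b y = integral {0..y} (\<lambda>t. (psi_ap t q a - t / real (totient q)
     + e / real (totient q) * (t powr b / b))\<^sup>2)"

definition J_fun :: "nat \<Rightarrow> nat \<Rightarrow> real \<Rightarrow> real \<Rightarrow> real \<Rightarrow> real \<Rightarrow> real" where
  "J_fun q a e b X h = integral {0..h} (\<lambda>x.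
     \<bar>\<Sum>n\<in>{n. 1 \<le> n \<and> real n \<le> x}. F_fun q a e b n * exp (- real n / X)\<bar>\<^sup>2)"

end

theory Submission
  imports Defs "HOL-Complex_Analysis.Complex_Analysis"
begin

(*
  Write S(N) for the partial sums of F. Abel summation against the weights exp(-n/X), whose
  successive differences lie in [0, 1/X], and Cauchy-Schwarz with N <= X bound the square of the
  smoothed sum by 2 S(N)^2 + (2/X) sum_{m<N} S(m)^2; integrating over [0, h] with h <= X gives
  J <= 4 * integral of S(floor x)^2. As sum_{n<=x} n^(b-1) = x^b/b + O(1/b), the step function
  S(floor x) is within (1 + 1/b)/phi(q) of the integrand of H, so J <= 8 H + 8 (1 + 1/b)^2 h/phi(q)^2.

  It remains to bound b below uniformly in q. For log q >= 2c the definition of a Siegel zero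
  gives b >= 1/2. Each of the finitely many other moduli carries finitely many characters, and
  the real zeros of a nonprincipal L(s, chi) cannot accumulate at 0: summing over blocks of length
  q with the linear Taylor term of each block removed continues L(s, chi) holomorphically to a
  neighbourhood of 0, and the continuation does not vanish identically since |L(2, chi) - 1| <= 3/4.
*)

section \<open>Dirichlet characters\<close>

lemma dirichlet_char_modulus_ge_1: "dirichlet_char q chi \<Longrightarrow> q \<ge> 1"
  unfolding dirichlet_char_def by blast

lemma dirichlet_char_add_mult:
  assumes "dirichlet_char q chi" shows "chi (m + k * q) = chi m"
proof (induction k)
  case (Suc k)
  have "chi (m + Suc k * q) = chi ((m + k * q) + q)" by (simp add: algebra_simps)
  also have "\<dots> = chi (m + k * q)" using assms unfolding dirichlet_char_def by blast
  finally show ?case using Suc by simp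
qed simp

lemma dirichlet_char_mod:
  assumes "dirichlet_char q chi" shows "chi (n mod q) = chi n"
  using dirichlet_char_add_mult[OF assms, of "n mod q" "n div q"] by simp

lemma dirichlet_char_power:
  assumes "dirichlet_char q chi" shows "chi (n ^ k) = chi n ^ k"
  using assms unfolding dirichlet_char_def by (induction k) auto

lemma abs_dirichlet_char_coprime:
  assumes dc: "dirichlet_char q chi" and "coprime n q" shows "\<bar>chi n\<bar> = 1"
proof -
  have "(n ^ totient q) mod q = 1 mod q"
    using euler_theorem[OF assms(2)] by (simp add: cong_def)
  then have "chi (n ^ totient q) = chi 1" by (metis dirichlet_char_mod[OF dc])
  then have "chi n ^ totient q = 1"
    using dc unfolding dirichlet_char_power[OF dc] dirichlet_char_def by simp
  then have "\<bar>chi n\<bar> ^ totient q = 1" by (simp flip: power_abs)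
  moreover have "totient q > 0" using dirichlet_char_modulus_ge_1[OF dc] by simp
  ultimately show ?thesis using power_eq_imp_eq_base[of "\<bar>chi n\<bar>" "totient q" 1] by simp
qed

lemma abs_dirichlet_char_le_1:
  assumes "dirichlet_char q chi" shows "\<bar>chi n\<bar> \<le> 1"
proof (cases "coprime n q")
  case False
  then have "chi n = 0" using assms unfolding dirichlet_char_def by blast
  then show ?thesis by simp
qed (simp add: abs_dirichlet_char_coprime[OF assms])

lemma bij_betw_mult_mod_lessThan:
  fixes m q :: nat
  assumes "coprime m q" shows "bij_betw (\<lambda>r. m * r mod q) {..<q} {..<q}"
proof -
  have inj: "inj_on (\<lambda>r. m * r mod q) {..<q}"
  proof (rule inj_onI)
    fix x y assume "x \<in> {..<q}" "y \<in> {..<q}" "m * x mod q = m * y mod q"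
    then show "x = y" using cong_mult_lcancel_nat[OF assms] by (simp add: cong_def)
  qed
  moreover have "(\<lambda>r. m * r mod q) ` {..<q} \<subseteq> {..<q}" by auto
  ultimately show ?thesis by (simp add: bij_betw_def endo_inj_surj)
qed

lemma sum_dirichlet_char_lessThan_eq_0:
  assumes dc: "dirichlet_char q chi" and "chi \<noteq> principal_char q"
  shows "(\<Sum>r<q. chi r) = 0"
proof -
  obtain m where "chi m \<noteq> principal_char q m" using assms(2) by blast
  then have cop: "coprime m q" and ne: "chi m \<noteq> 1"
    using dc unfolding principal_char_def dirichlet_char_def by (auto split: if_splits)
  have "(\<Sum>r<q. chi r) = (\<Sum>r<q. chi (m * r mod q))"
    by (rule sum.reindex_bij_betw[OF bij_betw_mult_mod_lessThan[OF cop], symmetric])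
  also have "\<dots> = chi m * (\<Sum>r<q. chi r)"
    using dc unfolding sum_distrib_left dirichlet_char_mod[OF dc] dirichlet_char_def by simp
  finally show ?thesis using ne by simp
qed

lemma sum_dirichlet_char_atLeastAtMost_eq_0:
  assumes dc: "dirichlet_char q chi" and "chi \<noteq> principal_char q"
  shows "(\<Sum>r=1..q. chi r) = 0"
proof -
  have q: "q \<ge> 1" using dirichlet_char_modulus_ge_1[OF dc] .
  have "(\<Sum>r=1..q. chi r) = (\<Sum>r\<in>insert q {1..<q}. chi r)"
    using q by (simp add: atLeastLessThanSuc_atLeastAtMost[symmetric])
  also have "\<dots> = (\<Sum>r\<in>insert 0 {1..<q}. chi r)"
    using q dirichlet_char_mod[OF dc, of q] by simp
  also have "insert 0 {1..<q} = {..<q}" using q by auto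
  finally show ?thesis using sum_dirichlet_char_lessThan_eq_0[OF assms] by simp
qed

lemma finite_dirichlet_chars: "finite {chi. dirichlet_char q chi}"
proof -
  let ?restrict = "\<lambda>chi. restrict chi {..<q}"
  have "inj_on ?restrict {chi. dirichlet_char q chi}"
  proof (rule inj_onI, rule ext)
    fix chi chi' n
    assume dc: "chi \<in> {chi. dirichlet_char q chi}" "chi' \<in> {chi. dirichlet_char q chi}"
      and eq: "?restrict chi = ?restrict chi'"
    have "q \<ge> 1" using dc(1) dirichlet_char_modulus_ge_1 by blast
    then have "chi (n mod q) = chi' (n mod q)" using eq by (metis lessThan_iff mod_less_divisor
      restrict_apply' zero_less_one order_less_le_trans)
    then show "chi n = chi' n" using dc by (simp add: dirichlet_char_mod)
  qed
  moreover have "?restrict ` {chi. dirichlet_char q chi} \<subseteq> PiE {..<q} (\<lambda>_. {-1, 0, 1})"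
  proof -
    have "chi n \<in> {-1, 0, 1}" if "dirichlet_char q chi" for chi n
      using that abs_dirichlet_char_coprime[OF that, of n] unfolding dirichlet_char_def
      by (cases "coprime n q") (auto simp: abs_if split: if_splits)
    then show ?thesis by (intro image_subsetI) (simp add: Pi_iff)
  qed
  moreover have "finite (PiE {..<q} (\<lambda>_. {-1::real, 0, 1}))" by (intro finite_PiE) auto
  ultimately show ?thesis by (meson finite_imageD finite_subset)
qed

section \<open>Real zeros of Dirichlet L-functions near 0\<close>

lemma field_differentiable_second_order_bound:
  fixes f f' f'' :: "'a::real_normed_field \<Rightarrow> 'a"
  assumes f': "\<And>z. z \<in> closed_segment x y \<Longrightarrow> (f has_field_derivative f' z) (at z within closed_segment x y)"
    and f'': "\<And>z. z \<in> closed_segment x y \<Longrightarrow> (f' has_field_derivative f'' z) (at z within closed_segment x y)"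
    and bound: "\<And>z. z \<in> closed_segment x y \<Longrightarrow> norm (f'' z) \<le> M"
  shows "norm (f y - f x - (y - x) * f' x) \<le> M * norm (y - x) ^ 2"
proof -
  let ?S = "closed_segment x y"
  have "M \<ge> 0" using bound[of x] by (meson ends_in_segment(1) norm_ge_zero order_trans)
  have f'_bound: "norm (f' z - f' x) \<le> M * norm (y - x)" if "z \<in> ?S" for z
  proof -
    have "norm (f' z - f' x) \<le> M * norm (z - x)"
      by (rule field_differentiable_bound[OF convex_closed_segment f'' bound that ends_in_segment(1)])
    also have "\<dots> \<le> M * norm (y - x)" using segment_bound1[OF that] \<open>M \<ge> 0\<close> by (rule mult_left_mono)
    finally show ?thesis .
  qed
  define g where "g z = f z - z * f' x" for z
  have "(g has_field_derivative f' z - f' x) (at z within ?S)" if "z \<in> ?S" for z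
    unfolding g_def using f'[OF that] by (auto intro!: derivative_eq_intros)
  then have "norm (g y - g x) \<le> M * norm (y - x) * norm (y - x)"
    by (rule field_differentiable_bound[OF convex_closed_segment _ f'_bound]) auto
  then show ?thesis unfolding g_def by (simp add: power2_eq_square algebra_simps)
qed

lemma norm_powr_taylor_remainder_le:
  fixes x t :: real and s :: complex
  assumes x: "x > 0" and t: "t \<ge> 0" and s: "Re s \<ge> -2"
  shows "norm (of_real (x + t) powr (-s) - of_real x powr (-s) - of_real t * (-s * of_real x powr (-s - 1)))
         \<le> t\<^sup>2 * (norm s * norm (s + 1) * x powr (-Re s - 2))"
proof -
  let ?S = "closed_segment (complex_of_real x) (complex_of_real (x + t))"
  have on_segment: "\<exists>y. z = of_real y \<and> x \<le> y" if "z \<in> ?S" for z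
    using that t unfolding closed_segment_of_real by (auto simp: closed_segment_eq_real_ivl)
  have "norm (of_real (x + t) powr (-s) - of_real x powr (-s) - (of_real (x + t) - of_real x) * (-s * of_real x powr (-s - 1)))
        \<le> norm s * norm (s + 1) * x powr (-Re s - 2) * norm (complex_of_real (x + t) - of_real x) ^ 2"
  proof (rule field_differentiable_second_order_bound)
    fix z assume "z \<in> ?S"
    then obtain y where y: "z = of_real y" "x \<le> y" using on_segment by blast
    then have "of_real y \<notin> \<real>\<^sub>\<le>\<^sub>0" using x by (simp add: complex_nonpos_Reals_iff)
    then show "((\<lambda>z. z powr (-s)) has_field_derivative -s * z powr (-s - 1)) (at z within ?S)"
      and "((\<lambda>z. -s * z powr (-s - 1)) has_field_derivative -s * ((-s - 1) * z powr (-s - 1 - 1))) (at z within ?S)"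
      unfolding y(1) by (auto intro!: derivative_eq_intros)
    have "-s * ((-s - 1) * of_real y powr (-s - 1 - 1)) = s * ((s + 1) * of_real y powr (-s - 2))"
      by (simp add: algebra_simps)
    also have "norm \<dots> = norm s * norm (s + 1) * y powr (-Re s - 2)"
      using x y by (simp add: norm_mult norm_powr_real_powr)
    also have "\<dots> \<le> norm s * norm (s + 1) * x powr (-Re s - 2)"
      using x y s by (intro mult_left_mono powr_mono2') auto
    finally show "norm (-s * ((-s - 1) * z powr (-s - 1 - 1))) \<le> norm s * norm (s + 1) * x powr (-Re s - 2)"
      unfolding y(1) .
  qed
  moreover have "norm (complex_of_real (x + t) - of_real x) = t"
    using t by (simp flip: of_real_diff)
  ultimately show ?thesis by (simp add: mult.commute)
qed

definition char_moment :: "nat \<Rightarrow> (nat \<Rightarrow> real) \<Rightarrow> real" where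
  "char_moment q chi = (\<Sum>r=1..q. real r * chi r)"

definition L_block :: "nat \<Rightarrow> (nat \<Rightarrow> real) \<Rightarrow> nat \<Rightarrow> complex \<Rightarrow> complex" where
  "L_block q chi k s = (\<Sum>r=1..q. of_real (chi r) * of_nat (k * q + r) powr (-s))"

(* Since chi sums to 0 over a block, a block is its linear Taylor term plus O(k^(-Re s - 2)).
   The correction cancels that term up to the same error and telescopes, so the corrected blocks
   sum to a continuation of L(s, chi) to Re s > -1. *)
definition L_block_corrected :: "nat \<Rightarrow> (nat \<Rightarrow> real) \<Rightarrow> nat \<Rightarrow> complex \<Rightarrow> complex" where
  "L_block_corrected q chi k s = L_block q chi k s
     + of_real (char_moment q chi / real q) * (of_nat (k * q) powr (-s) - of_nat (Suc k * q) powr (-s))"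

lemma abs_char_moment_le:
  assumes "dirichlet_char q chi" shows "\<bar>char_moment q chi\<bar> \<le> real q * real q"
proof -
  have "\<bar>char_moment q chi\<bar> \<le> (\<Sum>r=1..q. \<bar>real r * chi r\<bar>)"
    unfolding char_moment_def by (rule sum_abs)
  also have "\<dots> \<le> real (card {1..q}) * real q"
  proof (rule sum_bounded_above)
    fix r assume "r \<in> {1..q}"
    have "\<bar>real r * chi r\<bar> = real r * \<bar>chi r\<bar>" by (simp add: abs_mult)
    also have "\<dots> \<le> real r" using abs_dirichlet_char_le_1[OF assms] by (simp add: mult_left_le)
    finally show "\<bar>real r * chi r\<bar> \<le> real q" using \<open>r \<in> {1..q}\<close> by simp
  qed
  finally show ?thesis by simp
qed

lemma L_block_corrected_eq_remainders:
  fixes k :: nat and s :: complex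
  assumes dc: "dirichlet_char q chi" and np: "chi \<noteq> principal_char q"
  defines "R \<equiv> \<lambda>t. of_real (real (k * q) + t) powr (-s) - of_nat (k * q) powr (-s)
                   - of_real t * (-s * of_nat (k * q) powr (-s - 1))"
  shows "L_block_corrected q chi k s
           = (\<Sum>r=1..q. of_real (chi r) * R (real r)) - of_real (char_moment q chi / real q) * R (real q)"
proof -
  define D where "D = -s * of_nat (k * q) powr (-s - 1)"
  have expand: "of_nat (k * q + r) powr (-s) = R (real r) + of_nat (k * q) powr (-s) + of_real (real r) * D" for r
    unfolding R_def D_def by simp
  have "(\<Sum>r=1..q. complex_of_real (chi r)) = 0"
    using sum_dirichlet_char_atLeastAtMost_eq_0[OF dc np] by (metis of_real_0 of_real_sum)
  then have "L_block q chi k s = (\<Sum>r=1..q. of_real (chi r) * R (real r)) + D * of_real (char_moment q chi)"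
    unfolding L_block_def char_moment_def expand
    by (simp add: distrib_left sum.distrib sum_distrib_left flip: sum_distrib_right) (simp add: algebra_simps)
  moreover have "q \<noteq> 0" using dirichlet_char_modulus_ge_1[OF dc] by simp
  ultimately show ?thesis
    unfolding L_block_corrected_def using expand[of q] by (simp add: algebra_simps)
qed

lemma norm_L_block_corrected_le:
  assumes dc: "dirichlet_char q chi" and np: "chi \<noteq> principal_char q"
    and k: "k \<ge> 1" and s: "Re s \<ge> -2"
  shows "norm (L_block_corrected q chi k s)
           \<le> 2 * real q ^ 3 * (norm s * norm (s + 1) * real (k * q) powr (-Re s - 2))"
proof -
  have q: "q \<ge> 1" using dirichlet_char_modulus_ge_1[OF dc] .
  define M where "M = norm s * norm (s + 1) * real (k * q) powr (-Re s - 2)"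
  define R where "R t = of_real (real (k * q) + t) powr (-s) - of_nat (k * q) powr (-s)
                   - of_real t * (-s * of_nat (k * q) powr (-s - 1))" for t
  have R_le: "norm (R t) \<le> real q ^ 2 * M" if "0 \<le> t" "t \<le> real q" for t
  proof -
    have "norm (R t) \<le> t\<^sup>2 * M"
      unfolding R_def M_def using norm_powr_taylor_remainder_le[of "real (k * q)" t s] k q s that by simp
    also have "\<dots> \<le> real q ^ 2 * M" using that by (intro mult_right_mono power_mono) (auto simp: M_def)
    finally show ?thesis .
  qed
  have "norm (\<Sum>r=1..q. of_real (chi r) * R (real r)) \<le> real (card {1..q}) * (real q ^ 2 * M)"
  proof (rule order_trans[OF norm_sum sum_bounded_above])
    fix r assume "r \<in> {1..q}"
    then show "norm (of_real (chi r) * R (real r)) \<le> real q ^ 2 * M"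
      using abs_dirichlet_char_le_1[OF dc, of r] R_le[of "real r"]
      by (simp add: norm_mult) (meson abs_ge_zero mult_left_le_one_le norm_ge_zero order_trans)
  qed
  then have "norm (\<Sum>r=1..q. of_real (chi r) * R (real r)) \<le> real q * (real q ^ 2 * M)" by simp
  moreover have "norm (of_real (char_moment q chi / real q) * R (real q)) \<le> real q * (real q ^ 2 * M)"
  proof -
    have "\<bar>char_moment q chi / real q\<bar> \<le> real q"
      using abs_char_moment_le[OF dc] q by (simp add: abs_div divide_le_eq)
    then show ?thesis unfolding norm_mult norm_of_real using R_le[of "real q"] by (intro mult_mono) auto
  qed
  ultimately have "norm (L_block_corrected q chi k s) \<le> real q * (real q ^ 2 * M) + real q * (real q ^ 2 * M)"
    unfolding L_block_corrected_eq_remainders[OF dc np] R_def[symmetric]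
    by (rule order_trans[OF norm_triangle_ineq4 add_mono])
  then show ?thesis unfolding M_def by (simp add: power3_eq_cube power2_eq_square algebra_simps)
qed

definition continuation_domain :: "complex set" where
  "continuation_domain = {s. -1/2 < Re s} \<inter> ball 0 3"

definition L_continuation :: "nat \<Rightarrow> (nat \<Rightarrow> real) \<Rightarrow> complex \<Rightarrow> complex" where
  "L_continuation q chi s = L_block q chi 0 s - of_real (char_moment q chi / real q) * of_nat q powr (-s)
     + (\<Sum>k. L_block_corrected q chi (Suc k) s)"

lemma open_continuation_domain: "open continuation_domain"
  unfolding continuation_domain_def by (intro open_Int open_halfspace_Re_gt open_ball)

lemma convex_continuation_domain: "convex continuation_domain"
  unfolding continuation_domain_def by (intro convex_Int convex_halfspace_Re_gt convex_ball)

lemma norm_L_block_corrected_le_on_domain: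
  assumes dc: "dirichlet_char q chi" and np: "chi \<noteq> principal_char q"
    and s: "s \<in> continuation_domain"
  shows "norm (L_block_corrected q chi (Suc k) s) \<le> 24 * real q ^ 3 * real (Suc k) powr (-3/2)"
proof -
  have q: "q \<ge> 1" using dirichlet_char_modulus_ge_1[OF dc] .
  have Re_s: "Re s > -1/2" and norm_s: "norm s < 3" using s unfolding continuation_domain_def by auto
  have "norm s * norm (s + 1) \<le> 3 * 4"
    using norm_s norm_triangle_ineq[of s 1] by (intro mult_mono) auto
  moreover have "real (Suc k * q) powr (-Re s - 2) \<le> real (Suc k) powr (-3/2)"
  proof -
    have "1 \<le> real (Suc k * q)"
      using q by (metis One_nat_def Suc_le_eq mult_pos_pos of_nat_1 of_nat_le_iff zero_less_Suc)
    then have "real (Suc k * q) powr (-Re s - 2) \<le> real (Suc k * q) powr (-3/2)"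
      using Re_s by (intro powr_mono) (simp_all add: field_simps)
    also have "\<dots> \<le> real (Suc k) powr (-3/2)"
    proof (rule powr_mono2')
      show "real (Suc k) \<le> real (Suc k * q)"
        using q by (metis mult.right_neutral mult_le_mono2 of_nat_le_iff)
    qed auto
    finally show ?thesis .
  qed
  ultimately have factor_le: "norm s * norm (s + 1) * real (Suc k * q) powr (-Re s - 2) \<le> 12 * real (Suc k) powr (-3/2)"
    by (intro mult_mono) auto
  have "norm (L_block_corrected q chi (Suc k) s)
          \<le> 2 * real q ^ 3 * (norm s * norm (s + 1) * real (Suc k * q) powr (-Re s - 2))"
    using Re_s by (intro norm_L_block_corrected_le[OF dc np]) auto
  also have "\<dots> \<le> 2 * real q ^ 3 * (12 * real (Suc k) powr (-3/2))"
    using factor_le by (intro mult_left_mono) auto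
  finally show ?thesis by simp
qed

lemma summable_L_block_majorant: "summable (\<lambda>k. 24 * real q ^ 3 * real (Suc k) powr (-3/2))"
  using summable_Suc_iff[of "\<lambda>k. real k powr (-3/2)"] by (intro summable_mult) (simp add: summable_real_powr_iff)

lemma holomorphic_L_continuation:
  assumes dc: "dirichlet_char q chi" and np: "chi \<noteq> principal_char q"
  shows "L_continuation q chi holomorphic_on continuation_domain"
proof -
  have uniform: "uniform_limit continuation_domain (\<lambda>n s. \<Sum>k<n. L_block_corrected q chi (Suc k) s)
                   (\<lambda>s. \<Sum>k. L_block_corrected q chi (Suc k) s) sequentially"
    by (rule Weierstrass_m_test[OF norm_L_block_corrected_le_on_domain[OF dc np] summable_L_block_majorant])
  have "(\<lambda>s. \<Sum>k. L_block_corrected q chi (Suc k) s) holomorphic_on continuation_domain"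
  proof (rule holomorphic_uniform_sequence[OF open_continuation_domain])
    show "(\<lambda>s. \<Sum>k<n. L_block_corrected q chi (Suc k) s) holomorphic_on continuation_domain" for n
      unfolding L_block_corrected_def L_block_def by (intro holomorphic_intros holomorphic_on_powr_right)
    fix z assume "z \<in> continuation_domain"
    then obtain e where "e > 0" "cball z e \<subseteq> continuation_domain"
      using open_continuation_domain open_contains_cball by blast
    then show "\<exists>d>0. cball z d \<subseteq> continuation_domain \<and> uniform_limit (cball z d)
                 (\<lambda>n s. \<Sum>k<n. L_block_corrected q chi (Suc k) s) (\<lambda>s. \<Sum>k. L_block_corrected q chi (Suc k) s) sequentially"
      using uniform by (blast intro: uniform_limit_on_subset)
  qed
  then show ?thesis unfolding L_continuation_def L_block_def
    by (intro holomorphic_intros holomorphic_on_powr_right)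
qed

definition L_partial_sum :: "(nat \<Rightarrow> real) \<Rightarrow> nat \<Rightarrow> complex \<Rightarrow> complex" where
  "L_partial_sum chi N s = (\<Sum>n=1..N. of_real (chi n) * of_nat n powr (-s))"

lemma sum_atLeastAtMost_1_add:
  fixes f :: "nat \<Rightarrow> 'a::comm_monoid_add"
  shows "(\<Sum>n=1..m + l. f n) = (\<Sum>n=1..m. f n) + (\<Sum>r=1..l. f (m + r))"
  by (induction l) (auto simp: add.assoc)

lemma L_partial_sum_blocks:
  assumes dc: "dirichlet_char q chi"
  shows "L_partial_sum chi (Suc K * q) s = (\<Sum>k\<le>K. L_block q chi k s)"
proof (induction K)
  case 0
  show ?case unfolding L_partial_sum_def L_block_def by simp
next
  case (Suc K)
  have "L_partial_sum chi (Suc (Suc K) * q) s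
          = L_partial_sum chi (Suc K * q) s + (\<Sum>r=1..q. of_real (chi (Suc K * q + r)) * of_nat (Suc K * q + r) powr (-s))"
    unfolding L_partial_sum_def mult_Suc[of "Suc K"] add.commute[of q] by (rule sum_atLeastAtMost_1_add)
  also have "(\<Sum>r=1..q. of_real (chi (Suc K * q + r)) * of_nat (Suc K * q + r) powr (-s)) = L_block q chi (Suc K) s"
    unfolding L_block_def using dirichlet_char_add_mult[OF dc, of _ "Suc K"] by (simp add: add.commute)
  finally show ?case using Suc by simp
qed

lemma sum_L_block_eq:
  "(\<Sum>k\<le>K. L_block q chi k s) = L_block q chi 0 s + (\<Sum>k<K. L_block_corrected q chi (Suc k) s)
     - of_real (char_moment q chi / real q) * (of_nat q powr (-s) - of_nat (Suc K * q) powr (-s))"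
  by (induction K) (simp_all add: L_block_corrected_def algebra_simps)

lemma norm_of_nat_powr: "norm (of_nat n powr s :: complex) = real n powr Re s"
  by (subst norm_powr_real_powr) auto

lemma tendsto_powr_multiples_0:
  assumes "q \<ge> 1" "Re s > 0"
  shows "(\<lambda>K. complex_of_nat (Suc K * q) powr (-s)) \<longlonglongrightarrow> 0"
proof -
  have "real K \<le> real (Suc K * q)" for K
    using mult_le_mono[of K "Suc K" 1 q] assms(1) by (intro of_nat_mono) simp
  then have "filterlim (\<lambda>K. real (Suc K * q)) at_top sequentially"
    by (intro filterlim_at_top_mono[OF filterlim_real_sequentially always_eventually] allI)
  then have "(\<lambda>K. real (Suc K * q) powr Re (-s)) \<longlonglongrightarrow> 0"
    using assms(2) by (intro tendsto_neg_powr) auto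
  then have "(\<lambda>K. norm (complex_of_nat (Suc K * q) powr (-s))) \<longlonglongrightarrow> 0"
    unfolding norm_of_nat_powr .
  then show ?thesis by (rule tendsto_norm_zero_cancel)
qed

lemma L_partial_sum_tendsto_L_continuation:
  assumes dc: "dirichlet_char q chi" and np: "chi \<noteq> principal_char q"
    and s: "s \<in> continuation_domain" "Re s > 0"
  shows "(\<lambda>K. L_partial_sum chi (Suc K * q) s) \<longlonglongrightarrow> L_continuation q chi s"
proof -
  have "summable (\<lambda>k. L_block_corrected q chi (Suc k) s)"
    by (rule summable_comparison_test'[OF summable_L_block_majorant norm_L_block_corrected_le_on_domain[OF dc np s(1)]])
  then have "(\<lambda>K. L_block q chi 0 s + (\<Sum>k<K. L_block_corrected q chi (Suc k) s)
                - of_real (char_moment q chi / real q) * (of_nat q powr (-s) - of_nat (Suc K * q) powr (-s)))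
             \<longlonglongrightarrow> L_block q chi 0 s + (\<Sum>k. L_block_corrected q chi (Suc k) s)
                - of_real (char_moment q chi / real q) * (of_nat q powr (-s) - 0)"
    using dirichlet_char_modulus_ge_1[OF dc] s(2)
    by (intro tendsto_intros summable_LIMSEQ tendsto_powr_multiples_0)
  also have "L_block q chi 0 s + (\<Sum>k. L_block_corrected q chi (Suc k) s)
                - of_real (char_moment q chi / real q) * (of_nat q powr (-s) - 0) = L_continuation q chi s"
    unfolding L_continuation_def by (simp add: diff_add_eq)
  finally show ?thesis unfolding L_partial_sum_blocks[OF dc] sum_L_block_eq .
qed

lemma L_partial_sum_of_real:
  "L_partial_sum chi N (of_real b) = of_real (\<Sum>n=1..N. chi n * real n powr (-b))"
proof -
  have "complex_of_nat n powr (- of_real b) = of_real (real n powr (-b))" for n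
    using powr_of_real[of "real n" "-b"] by simp
  then show ?thesis unfolding L_partial_sum_def of_real_sum of_real_mult by simp
qed

lemma L_continuation_real_zero:
  assumes dc: "dirichlet_char q chi" and np: "chi \<noteq> principal_char q" and b: "L_real_zero chi b"
  shows "L_continuation q chi (of_real b) = 0"
proof -
  have b01: "0 < b" "b < 1" and partial_sums: "(\<lambda>N. \<Sum>n=1..N. chi n * real n powr (-b)) \<longlonglongrightarrow> 0"
    using b unfolding L_real_zero_def by auto
  have "strict_mono (\<lambda>K. Suc K * q)"
    using dirichlet_char_modulus_ge_1[OF dc] by (intro strict_monoI) auto
  from LIMSEQ_subseq_LIMSEQ[OF partial_sums this]
  have "(\<lambda>K. complex_of_real (\<Sum>n=1..Suc K * q. chi n * real n powr (-b))) \<longlonglongrightarrow> of_real 0"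
    by (intro tendsto_of_real) (simp add: o_def)
  then have "(\<lambda>K. L_partial_sum chi (Suc K * q) (of_real b)) \<longlonglongrightarrow> 0"
    unfolding L_partial_sum_of_real by simp
  moreover have "(\<lambda>K. L_partial_sum chi (Suc K * q) (of_real b)) \<longlonglongrightarrow> L_continuation q chi (of_real b)"
    using b01 by (intro L_partial_sum_tendsto_L_continuation[OF dc np]) (auto simp: continuation_domain_def)
  ultimately show ?thesis using LIMSEQ_unique by blast
qed

lemma sum_inverse_squares_from_2_le: "(\<Sum>n=2..N. 1 / (real n)\<^sup>2) \<le> 3/4"
proof -
  have telescoped: "(\<Sum>n=2..M+2. 1 / (real n)\<^sup>2) \<le> 3/4 - 1 / (real M + 2)" for M
  proof (induction M)
    case (Suc M)
    have "1 / (real M + 3)\<^sup>2 \<le> 1 / ((real M + 2) * (real M + 3))"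
      unfolding power2_eq_square by (intro divide_left_mono mult_right_mono mult_pos_pos) auto
    also have "\<dots> = 1 / (real M + 2) - 1 / (real M + 3)" by (simp add: field_simps)
    finally show ?case using Suc by (simp add: add_ac)
  qed (simp add: numeral_2_eq_2)
  show ?thesis
  proof (cases "N \<ge> 2")
    case True
    then obtain M where M: "N = M + 2" using le_Suc_ex by (metis add.commute)
    have "0 \<le> 1 / (real M + 2)" by simp
    then show ?thesis unfolding M using telescoped[of M] by linarith
  qed simp
qed

lemma norm_L_partial_sum_2_sub_1_le:
  assumes dc: "dirichlet_char q chi" and N: "N \<ge> 1"
  shows "norm (L_partial_sum chi N 2 - 1) \<le> 3/4"
proof -
  have "chi 1 = 1" using dc unfolding dirichlet_char_def by blast
  then have "L_partial_sum chi N 2 - 1 = (\<Sum>n=2..N. of_real (chi n) * of_nat n powr (-2))"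
    using N unfolding L_partial_sum_def by (simp add: sum.atLeast_Suc_atMost numeral_2_eq_2)
  also have "norm \<dots> \<le> (\<Sum>n=2..N. 1 / (real n)\<^sup>2)"
  proof (rule order_trans[OF norm_sum sum_mono])
    fix n assume "n \<in> {2..N}"
    then have "real n powr (-2) = 1 / (real n)\<^sup>2" by (simp add: powr_minus_divide)
    moreover have "norm (complex_of_real (chi n) * of_nat n powr (-2)) = \<bar>chi n\<bar> * real n powr (-2)"
      by (simp add: norm_mult norm_of_nat_powr)
    ultimately show "norm (complex_of_real (chi n) * of_nat n powr (-2)) \<le> 1 / (real n)\<^sup>2"
      using abs_dirichlet_char_le_1[OF dc, of n] by (simp add: divide_le_cancel)
  qed
  also have "\<dots> \<le> 3/4" by (rule sum_inverse_squares_from_2_le)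
  finally show ?thesis .
qed

lemma L_continuation_2_ne_0:
  assumes dc: "dirichlet_char q chi" and np: "chi \<noteq> principal_char q"
  shows "L_continuation q chi 2 \<noteq> 0"
proof -
  have "norm (L_continuation q chi 2 - 1) \<le> 3/4"
  proof (rule LIMSEQ_le_const2)
    show "(\<lambda>K. norm (L_partial_sum chi (Suc K * q) 2 - 1)) \<longlonglongrightarrow> norm (L_continuation q chi 2 - 1)"
      by (intro tendsto_intros L_partial_sum_tendsto_L_continuation[OF dc np])
        (auto simp: continuation_domain_def)
    show "\<exists>N. \<forall>K\<ge>N. norm (L_partial_sum chi (Suc K * q) 2 - 1) \<le> 3/4"
      using dirichlet_char_modulus_ge_1[OF dc]
      by (intro exI[of _ 0] allI impI norm_L_partial_sum_2_sub_1_le[OF dc]) auto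
  qed
  then show ?thesis by auto
qed

lemma L_real_zeros_bounded_below:
  assumes dc: "dirichlet_char q chi" and np: "chi \<noteq> principal_char q"
  shows "\<exists>\<epsilon>>0. \<forall>b. L_real_zero chi b \<longrightarrow> \<epsilon> \<le> b"
proof (rule ccontr)
  assume "\<not> ?thesis"
  then have small_zeros: "\<forall>\<epsilon>>0. \<exists>b. L_real_zero chi b \<and> b < \<epsilon>" by (auto simp: not_le)
  define Z where "Z = complex_of_real ` {b. L_real_zero chi b}"
  have Z: "Z \<subseteq> continuation_domain"
    unfolding Z_def L_real_zero_def continuation_domain_def by auto
  have "0 islimpt Z"
  proof (rule islimpt_approachable[THEN iffD2], intro allI impI)
    fix e :: real assume "e > 0"
    then obtain b where "L_real_zero chi b" "b < e" using small_zeros by blast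
    then show "\<exists>z\<in>Z. z \<noteq> 0 \<and> dist z 0 < e"
      unfolding Z_def L_real_zero_def by (intro bexI[of _ "complex_of_real b"]) auto
  qed
  moreover have "L_continuation q chi z = 0" if "z \<in> Z" for z
    using that L_continuation_real_zero[OF dc np] unfolding Z_def by blast
  moreover have "0 \<in> continuation_domain" "2 \<in> continuation_domain"
    unfolding continuation_domain_def by auto
  ultimately have "L_continuation q chi 2 = 0"
    using analytic_continuation[OF holomorphic_L_continuation[OF dc np] open_continuation_domain
          convex_connected[OF convex_continuation_domain] Z] by blast
  then show False using L_continuation_2_ne_0[OF dc np] by blast
qed

lemma L_real_zeros_bounded_below_uniform:
  assumes "finite Q"
  shows "\<exists>\<delta>>0. \<forall>q\<in>Q. \<forall>chi. dirichlet_char q chi \<and> chi \<noteq> principal_char q \<longrightarrow>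
                 (\<forall>b. L_real_zero chi b \<longrightarrow> \<delta> \<le> b)"
proof -
  define nonprincipal where "nonprincipal q = {chi. dirichlet_char q chi \<and> chi \<noteq> principal_char q}" for q
  have "finite (nonprincipal q)" for q
    unfolding nonprincipal_def by (rule finite_subset[OF _ finite_dirichlet_chars]) auto
  moreover have "eventually (\<lambda>\<delta>. \<forall>b. L_real_zero chi b \<longrightarrow> \<delta> \<le> b) (at_right 0)"
    if chi: "chi \<in> nonprincipal q" for q chi
  proof -
    obtain \<epsilon> where "\<epsilon> > 0" "\<forall>b. L_real_zero chi b \<longrightarrow> \<epsilon> \<le> b"
      using chi L_real_zeros_bounded_below unfolding nonprincipal_def by blast
    then show ?thesis unfolding eventually_at_right_field by (intro exI[of _ \<epsilon>]) auto
  qed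
  ultimately have "eventually (\<lambda>\<delta>. \<forall>q\<in>Q. \<forall>chi\<in>nonprincipal q. \<forall>b. L_real_zero chi b \<longrightarrow> \<delta> \<le> b) (at_right 0)"
    using assms by (intro eventually_ball_finite ballI) auto
  then obtain B where "B > 0"
    and below_B: "\<forall>\<delta>>0. \<delta> < B \<longrightarrow> (\<forall>q\<in>Q. \<forall>chi\<in>nonprincipal q. \<forall>b. L_real_zero chi b \<longrightarrow> \<delta> \<le> b)"
    unfolding eventually_at_right_field by blast
  have "B / 2 > 0" "B / 2 < B" using \<open>B > 0\<close> by auto
  with below_B show ?thesis unfolding nonprincipal_def by blast
qed

lemma finite_ln_less: "finite {q::nat. ln (real q) < x}"
proof (rule finite_subset)
  show "{q::nat. ln (real q) < x} \<subseteq> {..nat \<lceil>exp x\<rceil>}"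
  proof
    fix q :: nat assume q: "q \<in> {q. ln (real q) < x}"
    have "real q \<le> exp x"
    proof (cases "q = 0")
      case False
      then have "real q = exp (ln (real q))" by simp
      also have "\<dots> \<le> exp x" using q by simp
      finally show ?thesis .
    qed simp
    then have "real q \<le> real (nat \<lceil>exp x\<rceil>)" by linarith
    then show "q \<in> {..nat \<lceil>exp x\<rceil>}" by simp
  qed
qed simp

lemma siegel_zero_lower_bound:
  assumes c: "c > 0"
  shows "\<exists>b0>0. \<forall>q chi b. siegel_zero c q chi b \<longrightarrow> b0 \<le> b \<and> b < 1"
proof -
  obtain \<delta> where "\<delta> > 0" and small_moduli: "\<forall>q\<in>{q. ln (real q) < 2 * c}. \<forall>chi.
      dirichlet_char q chi \<and> chi \<noteq> principal_char q \<longrightarrow> (\<forall>b. L_real_zero chi b \<longrightarrow> \<delta> \<le> b)"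
    using L_real_zeros_bounded_below_uniform[OF finite_ln_less] by blast
  show ?thesis
  proof (intro exI[of _ "min \<delta> (1 / 2)"] conjI allI impI)
    fix q chi b assume "siegel_zero c q chi b"
    then have chi: "dirichlet_char q chi \<and> chi \<noteq> principal_char q" and zero: "L_real_zero chi b"
      and b: "b \<ge> 1 - c / ln (real q)"
      unfolding siegel_zero_def by auto
    show "b < 1" using zero unfolding L_real_zero_def by simp
    show "min \<delta> (1 / 2) \<le> b"
    proof (cases "ln (real q) < 2 * c")
      case True then show ?thesis using small_moduli chi zero by force
    next
      case False
      then have "c / ln (real q) \<le> 1 / 2" using c by (simp add: divide_le_eq)
      then show ?thesis using b by simp
    qed
  qed (use \<open>\<delta> > 0\<close> in simp)
qed

section \<open>Integrals of step functions\<close>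

lemma nat_le_real_set_eq_atLeastAtMost_floor: "{n::nat. 1 \<le> n \<and> real n \<le> x} = {1..nat \<lfloor>x\<rfloor>}"
proof -
  have "real n \<le> x \<longleftrightarrow> n \<le> nat \<lfloor>x\<rfloor>" if "n \<ge> 1" for n
  proof -
    have "real n \<le> x \<longleftrightarrow> int n \<le> \<lfloor>x\<rfloor>" by (simp add: le_floor_iff)
    also have "\<dots> \<longleftrightarrow> n \<le> nat \<lfloor>x\<rfloor>" using that by linarith
    finally show ?thesis .
  qed
  then show ?thesis by auto
qed

lemma borel_measurable_floor_step: "(\<lambda>x::real. f (nat \<lfloor>x\<rfloor>) :: real) \<in> borel_measurable borel"
  by (rule measurable_compose[OF measurable_real_floor]) simp

lemma abs_floor_step_le_sum:
  assumes "x \<le> b" shows "\<bar>f (nat \<lfloor>x\<rfloor>)\<bar> \<le> (\<Sum>n\<le>nat \<lfloor>b\<rfloor>. \<bar>f n :: real\<bar>)"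
proof -
  have "nat \<lfloor>x\<rfloor> \<le> nat \<lfloor>b\<rfloor>" using assms by (intro nat_mono floor_mono)
  then show ?thesis by (intro member_le_sum) auto
qed

lemma integrable_on_bounded_borel:
  fixes f :: "real \<Rightarrow> real"
  assumes "f \<in> borel_measurable borel" and "\<And>x. x \<in> {a..b} \<Longrightarrow> \<bar>f x\<bar> \<le> B"
  shows "f integrable_on {a..b}"
proof -
  have "f \<in> borel_measurable (lebesgue_on {a..b})"
    using assms(1) by (intro measurable_restrict_space1 measurable_completion) simp
  then show ?thesis
    by (rule measurable_bounded_by_integrable_imp_integrable_real[OF _ integrable_const_ivl assms(2)]) auto
qed

lemma integrable_floor_step: "(\<lambda>x::real. f (nat \<lfloor>x\<rfloor>) :: real) integrable_on {a..b}"
  by (rule integrable_on_bounded_borel[OF borel_measurable_floor_step abs_floor_step_le_sum[of _ b]]) simp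

lemma integral_floor_step_unit_interval:
  "integral {real n..real n + 1} (\<lambda>x::real. f (nat \<lfloor>x\<rfloor>) :: real) = f n"
proof -
  have "integral {real n..real n + 1} (\<lambda>x. f (nat \<lfloor>x\<rfloor>)) = integral {real n..real n + 1} (\<lambda>x. f n)"
  proof (rule integral_spike[OF negligible_sing[of "real n + 1"]])
    fix x assume "x \<in> {real n..real n + 1} - {real n + 1}"
    then have "\<lfloor>x\<rfloor> = int n" by (intro floor_unique) auto
    then show "f n = f (nat \<lfloor>x\<rfloor>)" by simp
  qed
  then show ?thesis by simp
qed

lemma integral_floor_step_eq_sum:
  "integral {0..real M} (\<lambda>x::real. f (nat \<lfloor>x\<rfloor>) :: real) = (\<Sum>n<M. f n)"
proof (induction M)
  case (Suc M)
  have "integral {0..real (Suc M)} (\<lambda>x. f (nat \<lfloor>x\<rfloor>))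
          = integral {0..real M} (\<lambda>x. f (nat \<lfloor>x\<rfloor>)) + integral {real M..real M + 1} (\<lambda>x. f (nat \<lfloor>x\<rfloor>))"
    by (simp add: Henstock_Kurzweil_Integration.integral_combine integrable_floor_step add.commute)
  then show ?case using Suc by (simp add: integral_floor_step_unit_interval)
qed simp

section \<open>The mean-square estimate\<close>

lemma abel_summation:
  fixes f w :: "nat \<Rightarrow> real"
  shows "(\<Sum>n=1..N. f n * w n)
           = (\<Sum>n=1..N. f n) * w N + (\<Sum>m\<in>{1..<N}. (\<Sum>n=1..m. f n) * (w m - w (Suc m)))"
proof (induction N)
  case (Suc N)
  show ?case
  proof (cases "N = 0")
    case False
    then have "{1..<Suc N} = insert N {1..<N}" by auto
    then show ?thesis using Suc by (simp add: algebra_simps)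
  qed simp
qed simp

lemma exp_weight_decrement_bounds:
  fixes X :: real assumes "X > 0"
  shows "0 \<le> exp (- real n / X) - exp (- real (Suc n) / X)"
    and "exp (- real n / X) - exp (- real (Suc n) / X) \<le> 1 / X"
proof -
  have "exp (- real (Suc n) / X) = exp (- real n / X) * exp (- 1 / X)"
    by (simp add: exp_add[symmetric] add_divide_distrib diff_divide_distrib)
  then have eq: "exp (- real n / X) - exp (- real (Suc n) / X) = exp (- real n / X) * (1 - exp (- 1 / X))"
    by (simp add: algebra_simps)
  have "0 \<le> 1 - exp (- 1 / X)" "1 - exp (- 1 / X) \<le> 1 / X"
    using assms exp_ge_add_one_self[of "- 1 / X"] by auto
  moreover have "0 \<le> exp (- real n / X)" "exp (- real n / X) \<le> 1" using assms by auto
  ultimately show "0 \<le> exp (- real n / X) - exp (- real (Suc n) / X)"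
    and "exp (- real n / X) - exp (- real (Suc n) / X) \<le> 1 / X"
    unfolding eq using mult_mono[of "exp (- real n / X)" 1 "1 - exp (- 1 / X)" "1 / X"] by auto
qed

lemma sum_mult_bounded_sq_le:
  fixes s d :: "'a \<Rightarrow> real"
  assumes "\<And>m. m \<in> A \<Longrightarrow> \<bar>d m\<bar> \<le> c"
  shows "(\<Sum>m\<in>A. s m * d m)\<^sup>2 \<le> real (card A) * c\<^sup>2 * (\<Sum>m\<in>A. (s m)\<^sup>2)"
proof -
  have "(\<Sum>m\<in>A. s m * d m)\<^sup>2 \<le> (\<Sum>m\<in>A. (s m * d m)\<^sup>2) * real (card A)"
    by (rule sum_squared_le_sum_of_squares)
  also have "\<dots> \<le> (\<Sum>m\<in>A. c\<^sup>2 * (s m)\<^sup>2) * real (card A)"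
  proof (intro mult_right_mono sum_mono)
    fix m assume "m \<in> A"
    then have "\<bar>d m\<bar>\<^sup>2 \<le> c\<^sup>2" using assms by (intro power_mono) auto
    then show "(s m * d m)\<^sup>2 \<le> c\<^sup>2 * (s m)\<^sup>2"
      using mult_left_mono[of "(d m)\<^sup>2" "c\<^sup>2" "(s m)\<^sup>2"] by (simp add: power_mult_distrib mult.commute)
  qed simp
  finally show ?thesis by (simp add: sum_distrib_left mult_ac)
qed

lemma smoothed_partial_sum_sq_le:
  fixes f :: "nat \<Rightarrow> real" and X :: real
  assumes X: "X > 0" and N: "real N \<le> X"
  shows "(\<Sum>n=1..N. f n * exp (- real n / X))\<^sup>2
           \<le> 2 * (\<Sum>n=1..N. f n)\<^sup>2 + 2 / X * (\<Sum>m\<in>{1..<N}. (\<Sum>n=1..m. f n)\<^sup>2)"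
proof -
  define s where "s m = (\<Sum>n=1..m. f n)" for m
  define d where "d m = exp (- real m / X) - exp (- real (Suc m) / X)" for m
  define A where "A = s N * exp (- real N / X)"
  define B where "B = (\<Sum>m\<in>{1..<N}. s m * d m)"
  have "(exp (- real N / X))\<^sup>2 \<le> 1" using X by (intro power_le_one) auto
  then have A_sq: "A\<^sup>2 \<le> (s N)\<^sup>2"
    unfolding A_def by (simp add: power_mult_distrib mult_right_le_one_le)
  have "B\<^sup>2 \<le> real (card {1..<N}) * (1 / X)\<^sup>2 * (\<Sum>m\<in>{1..<N}. (s m)\<^sup>2)"
    unfolding B_def d_def using exp_weight_decrement_bounds[OF X] by (intro sum_mult_bounded_sq_le) auto
  also have "\<dots> \<le> X * (1 / X)\<^sup>2 * (\<Sum>m\<in>{1..<N}. (s m)\<^sup>2)"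
    using N by (intro mult_right_mono sum_nonneg) auto
  finally have B_sq: "B\<^sup>2 \<le> (\<Sum>m\<in>{1..<N}. (s m)\<^sup>2) / X"
    using X by (simp add: power2_eq_square)
  have "(\<Sum>n=1..N. f n * exp (- real n / X)) = A + B"
    unfolding abel_summation[of f] s_def d_def A_def B_def ..
  also have "(A + B)\<^sup>2 \<le> 2 * A\<^sup>2 + 2 * B\<^sup>2"
  proof -
    have "(A + B)\<^sup>2 + (A - B)\<^sup>2 = 2 * A\<^sup>2 + 2 * B\<^sup>2" by (simp add: power2_eq_square algebra_simps)
    then show ?thesis using zero_le_power2[of "A - B"] by linarith
  qed
  also have "\<dots> \<le> 2 * (s N)\<^sup>2 + 2 * ((\<Sum>m\<in>{1..<N}. (s m)\<^sup>2) / X)"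
    using A_sq B_sq by linarith
  finally show ?thesis unfolding s_def by simp
qed

lemma sum_floor_step_le_integral:
  fixes f :: "nat \<Rightarrow> real" and h :: real
  assumes f: "\<And>n. 0 \<le> f n" and h: "0 \<le> h"
  shows "(\<Sum>n<nat \<lfloor>h\<rfloor>. f n) \<le> integral {0..h} (\<lambda>x. f (nat \<lfloor>x\<rfloor>))"
proof -
  have "real (nat \<lfloor>h\<rfloor>) \<le> h" using h by simp
  then have "integral {0..real (nat \<lfloor>h\<rfloor>)} (\<lambda>x. f (nat \<lfloor>x\<rfloor>))
               + integral {real (nat \<lfloor>h\<rfloor>)..h} (\<lambda>x. f (nat \<lfloor>x\<rfloor>)) = integral {0..h} (\<lambda>x. f (nat \<lfloor>x\<rfloor>))"
    by (intro Henstock_Kurzweil_Integration.integral_combine integrable_floor_step) auto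
  moreover have "0 \<le> integral {real (nat \<lfloor>h\<rfloor>)..h} (\<lambda>x. f (nat \<lfloor>x\<rfloor>))"
    using f by (intro integral_nonneg integrable_floor_step) auto
  ultimately show ?thesis unfolding integral_floor_step_eq_sum by linarith
qed

lemma smoothed_partial_sum_floor_sq_le:
  fixes f :: "nat \<Rightarrow> real" and X h x :: real
  assumes X: "X > 0" and x: "0 \<le> x" "x \<le> h" and h: "h \<le> X"
  shows "(\<Sum>n=1..nat \<lfloor>x\<rfloor>. f n * exp (- real n / X))\<^sup>2
           \<le> 2 * (\<Sum>n=1..nat \<lfloor>x\<rfloor>. f n)\<^sup>2 + 2 / X * (\<Sum>m<nat \<lfloor>h\<rfloor>. (\<Sum>n=1..m. f n)\<^sup>2)"
proof -
  have "real (nat \<lfloor>x\<rfloor>) \<le> x" using x by simp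
  then have "real (nat \<lfloor>x\<rfloor>) \<le> X" using x h by linarith
  then have "(\<Sum>n=1..nat \<lfloor>x\<rfloor>. f n * exp (- real n / X))\<^sup>2
               \<le> 2 * (\<Sum>n=1..nat \<lfloor>x\<rfloor>. f n)\<^sup>2 + 2 / X * (\<Sum>m\<in>{1..<nat \<lfloor>x\<rfloor>}. (\<Sum>n=1..m. f n)\<^sup>2)"
    by (rule smoothed_partial_sum_sq_le[OF X])
  also have "(\<Sum>m\<in>{1..<nat \<lfloor>x\<rfloor>}. (\<Sum>n=1..m. f n)\<^sup>2) \<le> (\<Sum>m<nat \<lfloor>h\<rfloor>. (\<Sum>n=1..m. f n)\<^sup>2)"
  proof -
    have "nat \<lfloor>x\<rfloor> \<le> nat \<lfloor>h\<rfloor>" using x by (intro nat_mono floor_mono)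
    then show ?thesis by (intro sum_mono2) auto
  qed
  finally show ?thesis using X by (simp add: divide_right_mono)
qed

lemma integral_smoothed_partial_sums_sq_le:
  fixes f :: "nat \<Rightarrow> real" and X h :: real
  assumes X: "X > 0" and h: "0 \<le> h" "h \<le> X"
  shows "integral {0..h} (\<lambda>x. (\<Sum>n=1..nat \<lfloor>x\<rfloor>. f n * exp (- real n / X))\<^sup>2)
           \<le> 4 * integral {0..h} (\<lambda>x. (\<Sum>n=1..nat \<lfloor>x\<rfloor>. f n)\<^sup>2)"
proof -
  define s where "s m = (\<Sum>n=1..m. f n)" for m
  define Q where "Q = (\<Sum>m<nat \<lfloor>h\<rfloor>. (s m)\<^sup>2)"
  define I where "I = integral {0..h} (\<lambda>x. (s (nat \<lfloor>x\<rfloor>))\<^sup>2)"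
  have "integral {0..h} (\<lambda>x. (\<Sum>n=1..nat \<lfloor>x\<rfloor>. f n * exp (- real n / X))\<^sup>2)
          \<le> integral {0..h} (\<lambda>x. 2 * (s (nat \<lfloor>x\<rfloor>))\<^sup>2 + 2 / X * Q)"
    unfolding s_def Q_def using X h
    by (intro integral_le integrable_floor_step smoothed_partial_sum_floor_sq_le) auto
  also have "\<dots> = 2 * I + 2 * Q * (h / X)"
  proof -
    have "(\<lambda>x. (s (nat \<lfloor>x\<rfloor>))\<^sup>2) integrable_on {0..h}" by (rule integrable_floor_step)
    then have "integral {0..h} (\<lambda>x. 2 * (s (nat \<lfloor>x\<rfloor>))\<^sup>2 + 2 / X * Q)
                 = integral {0..h} (\<lambda>x. 2 * (s (nat \<lfloor>x\<rfloor>))\<^sup>2) + integral {0..h} (\<lambda>x. 2 / X * Q)"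
      by (intro integral_add integrable_on_mult_right integrable_const_ivl)
    then show ?thesis unfolding I_def integral_mult_right using h by simp
  qed
  also have "\<dots> \<le> 2 * I + 2 * Q"
  proof -
    have "0 \<le> Q" unfolding Q_def by (intro sum_nonneg) auto
    moreover have "h / X \<le> 1" using h X by simp
    ultimately have "2 * Q * (h / X) \<le> 2 * Q" by (intro mult_left_le) auto
    then show ?thesis by simp
  qed
  also have "Q \<le> I"
    unfolding Q_def I_def using h by (intro sum_floor_step_le_integral) auto
  finally show ?thesis unfolding I_def s_def by linarith
qed

lemma integral_floor_step_sq_le_approx:
  fixes S :: "nat \<Rightarrow> real" and g :: "real \<Rightarrow> real"
  assumes g: "g \<in> borel_measurable borel" and ab: "a \<le> b"
    and approx: "\<And>x. x \<in> {a..b} \<Longrightarrow> \<bar>S (nat \<lfloor>x\<rfloor>) - g x\<bar> \<le> E"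
  shows "integral {a..b} (\<lambda>x. (S (nat \<lfloor>x\<rfloor>))\<^sup>2) \<le> 2 * integral {a..b} (\<lambda>x. (g x)\<^sup>2) + 2 * E\<^sup>2 * (b - a)"
proof -
  have "(\<lambda>x. (g x)\<^sup>2) integrable_on {a..b}"
  proof (rule integrable_on_bounded_borel)
    show "(\<lambda>x. (g x)\<^sup>2) \<in> borel_measurable borel" using g by measurable
    fix x assume x: "x \<in> {a..b}"
    have "\<bar>g x\<bar> \<le> \<bar>S (nat \<lfloor>x\<rfloor>)\<bar> + \<bar>S (nat \<lfloor>x\<rfloor>) - g x\<bar>" by linarith
    also have "\<dots> \<le> (\<Sum>n\<le>nat \<lfloor>b\<rfloor>. \<bar>S n\<bar>) + E"
      using x by (intro add_mono abs_floor_step_le_sum approx) auto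
    finally have "\<bar>g x\<bar>\<^sup>2 \<le> ((\<Sum>n\<le>nat \<lfloor>b\<rfloor>. \<bar>S n\<bar>) + E)\<^sup>2" by (intro power_mono) auto
    then show "\<bar>(g x)\<^sup>2\<bar> \<le> ((\<Sum>n\<le>nat \<lfloor>b\<rfloor>. \<bar>S n\<bar>) + E)\<^sup>2" by simp
  qed
  moreover have "(S (nat \<lfloor>x\<rfloor>))\<^sup>2 \<le> 2 * (g x)\<^sup>2 + 2 * E\<^sup>2" if "x \<in> {a..b}" for x
  proof -
    have "\<bar>S (nat \<lfloor>x\<rfloor>) - g x\<bar>\<^sup>2 \<le> E\<^sup>2" using approx[OF that] by (intro power_mono) auto
    then have "(S (nat \<lfloor>x\<rfloor>) - g x)\<^sup>2 \<le> E\<^sup>2" by simp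
    moreover have "(S (nat \<lfloor>x\<rfloor>))\<^sup>2 + (S (nat \<lfloor>x\<rfloor>) - 2 * g x)\<^sup>2 = 2 * (g x)\<^sup>2 + 2 * (S (nat \<lfloor>x\<rfloor>) - g x)\<^sup>2"
      by (simp add: power2_eq_square algebra_simps)
    ultimately show ?thesis using zero_le_power2[of "S (nat \<lfloor>x\<rfloor>) - 2 * g x"] by linarith
  qed
  ultimately have "integral {a..b} (\<lambda>x. (S (nat \<lfloor>x\<rfloor>))\<^sup>2) \<le> integral {a..b} (\<lambda>x. 2 * (g x)\<^sup>2 + 2 * E\<^sup>2)"
    by (intro integral_le integrable_floor_step integrable_add integrable_on_mult_right integrable_const_ivl)
  also have "\<dots> = integral {a..b} (\<lambda>x. 2 * (g x)\<^sup>2) + integral {a..b} (\<lambda>x. 2 * E\<^sup>2)"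
    using \<open>(\<lambda>x. (g x)\<^sup>2) integrable_on {a..b}\<close>
    by (intro integral_add integrable_on_mult_right integrable_const_ivl)
  also have "\<dots> = 2 * integral {a..b} (\<lambda>x. (g x)\<^sup>2) + 2 * E\<^sup>2 * (b - a)"
    using ab by simp
  finally show ?thesis .
qed

lemma powr_le_tangent:
  fixes x y b :: real
  assumes x: "0 < x" and y: "0 \<le> y" and b: "0 \<le> b" "b \<le> 1"
  shows "y powr b \<le> x powr b + b * x powr (b - 1) * (y - x)"
proof (cases "y = 0")
  case True
  have "b * x powr (b - 1) * (y - x) = - (b * x powr b)" using True x by (simp add: powr_diff)
  moreover have "b * x powr b \<le> x powr b" using b by (simp add: mult_left_le_one_le)
  moreover have "y powr b = 0" using True by simp
  ultimately show ?thesis by linarith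
next
  case False
  then have "y powr b * x powr (1 - b) \<le> b * y + (1 - b) * x"
    using Youngs_inequality_0[of b "1 - b" y x] x y b by simp
  moreover have "x powr (1 - b) * x powr (b - 1) = 1" using x by (simp flip: powr_add)
  moreover have "x * x powr (b - 1) = x powr b" using x by (simp add: powr_diff)
  ultimately have "y powr b \<le> (b * y + (1 - b) * x) * x powr (b - 1)"
    using x by (metis mult.assoc mult.right_neutral mult_right_mono powr_ge_zero)
  also have "\<dots> = x powr b + b * x powr (b - 1) * (y - x)"
    using \<open>x * x powr (b - 1) = x powr b\<close> by (simp add: algebra_simps)
  finally show ?thesis .
qed

lemma sum_powr_upper:
  assumes "0 \<le> b" "b \<le> 1"
  shows "b * (\<Sum>n=1..N. real n powr (b - 1)) \<le> real N powr b"
proof (induction N)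
  case (Suc N)
  have "real N powr b \<le> real (Suc N) powr b - b * real (Suc N) powr (b - 1)"
    using powr_le_tangent[of "real (Suc N)" "real N" b] assms by simp
  then show ?case using Suc by (simp add: distrib_left)
qed simp

lemma sum_powr_lower:
  assumes "0 \<le> b" "b \<le> 1"
  shows "real (Suc N) powr b - 1 \<le> b * (\<Sum>n=1..N. real n powr (b - 1))"
proof (induction N)
  case (Suc N)
  have "real (Suc (Suc N)) powr b \<le> real (Suc N) powr b + b * real (Suc N) powr (b - 1)"
    using powr_le_tangent[of "real (Suc N)" "real (Suc (Suc N))" b] assms by simp
  then show ?case using Suc by (simp add: distrib_left)
qed simp

lemma abs_sum_powr_sub_le:
  assumes b: "0 < b" "b \<le> 1" and x: "0 \<le> x"
  shows "\<bar>(\<Sum>n=1..nat \<lfloor>x\<rfloor>. real n powr (b - 1)) - x powr b / b\<bar> \<le> 1 / b"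
proof -
  define N where "N = nat \<lfloor>x\<rfloor>"
  have N: "real N \<le> x" "x \<le> real (Suc N)" unfolding N_def using x by linarith+
  define S where "S = (\<Sum>n=1..N. real n powr (b - 1))"
  have "b * S \<le> x powr b"
    using sum_powr_upper[of b N] powr_mono2[of b "real N" x] N b unfolding S_def by simp
  then have "S - x powr b / b \<le> 0" using b by (simp add: field_simps)
  moreover have "x powr b - 1 \<le> b * S"
    using sum_powr_lower[of b N] powr_mono2[of b x "real (Suc N)"] N x b unfolding S_def by simp
  then have "- (1 / b) \<le> S - x powr b / b" using b by (simp add: field_simps)
  ultimately show ?thesis unfolding S_def N_def by (simp add: abs_le_iff)
qed

lemma psi_ap_eq_sum: "psi_ap t q a = (\<Sum>m=1..nat \<lfloor>t\<rfloor>. mangoldt m * delta_ap q a m)"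
proof -
  have "{m. 1 \<le> m \<and> real m \<le> t \<and> [m = a] (mod q)} = {m \<in> {1..nat \<lfloor>t\<rfloor>}. [m = a] (mod q)}"
    using nat_le_real_set_eq_atLeastAtMost_floor[of t] by blast
  then have "psi_ap t q a = (\<Sum>m\<in>{m \<in> {1..nat \<lfloor>t\<rfloor>}. [m = a] (mod q)}. mangoldt m)"
    unfolding psi_ap_def by simp
  also have "\<dots> = (\<Sum>m=1..nat \<lfloor>t\<rfloor>. if [m = a] (mod q) then mangoldt m else 0)"
    by (rule sum.inter_filter) simp
  also have "\<dots> = (\<Sum>m=1..nat \<lfloor>t\<rfloor>. mangoldt m * delta_ap q a m)"
    unfolding delta_ap_def by (intro sum.cong) auto
  finally show ?thesis .
qed

lemma abs_sum_F_fun_sub_le: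
  fixes x :: real
  assumes x: "0 \<le> x" and eb: "e = 0 \<or> (0 < b \<and> b \<le> 1)"
  shows "\<bar>(\<Sum>n=1..nat \<lfloor>x\<rfloor>. F_fun q a e b n)
            - (psi_ap x q a - x / real (totient q) + e / real (totient q) * (x powr b / b))\<bar>
         \<le> (1 + \<bar>e\<bar> / b) / real (totient q)"
proof -
  define N where "N = nat \<lfloor>x\<rfloor>"
  define u where "u = 1 / real (totient q)"
  define D where "D = (\<Sum>n=1..N. real n powr (b - 1)) - x powr b / b"
  have "(\<Sum>n=1..N. F_fun q a e b n) = (\<Sum>m=1..N. mangoldt m * delta_ap q a m) - real N * u
          + e * u * (\<Sum>n=1..N. real n powr (b - 1))"
    unfolding F_fun_def u_def by (simp add: sum.distrib sum_subtractf sum_distrib_left)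
  then have diff: "(\<Sum>n=1..N. F_fun q a e b n) - (psi_ap x q a - x * u + e * u * (x powr b / b))
                     = (x - real N) * u + e * u * D"
    unfolding psi_ap_eq_sum N_def[symmetric] D_def by (simp add: algebra_simps)
  have u: "u \<ge> 0" unfolding u_def by simp
  have "real N = of_int \<lfloor>x\<rfloor>" unfolding N_def using x by simp
  then have "0 \<le> x - real N" "x - real N \<le> 1" by linarith+
  then have "\<bar>(x - real N) * u\<bar> \<le> u" using u by (simp add: abs_mult mult_left_le_one_le)
  moreover have "\<bar>e * u * D\<bar> \<le> \<bar>e\<bar> / b * u"
    using eb
  proof
    assume "0 < b \<and> b \<le> 1"
    then have "\<bar>D\<bar> \<le> 1 / b" unfolding D_def N_def using abs_sum_powr_sub_le x by blast
    then have "\<bar>D\<bar> * (\<bar>e\<bar> * u) \<le> 1 / b * (\<bar>e\<bar> * u)" using u by (intro mult_right_mono) auto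
    then show ?thesis using u by (simp add: abs_mult mult_ac)
  qed simp
  ultimately have "\<bar>(x - real N) * u + e * u * D\<bar> \<le> (1 + \<bar>e\<bar> / b) * u"
    by (simp add: distrib_right order_trans[OF abs_triangle_ineq add_mono])
  then show ?thesis using diff unfolding u_def N_def by simp
qed

lemma H_fun_nonneg: "0 \<le> H_fun q a e b y"
proof -
  let ?f = "\<lambda>t. (psi_ap t q a - t / real (totient q) + e / real (totient q) * (t powr b / b))\<^sup>2"
  show ?thesis
  proof (cases "?f integrable_on {0..y}")
    case True then show ?thesis unfolding H_fun_def by (rule integral_nonneg) auto
  qed (simp add: H_fun_def not_integrable_integral)
qed

lemma J_fun_le:
  assumes X: "0 < X" and h: "0 \<le> h" "h \<le> X" and eb: "e = 0 \<or> (0 < b \<and> b \<le> 1)"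
  shows "J_fun q a e b X h \<le> 8 * H_fun q a e b h + 8 * ((1 + \<bar>e\<bar> / b) / real (totient q))\<^sup>2 * h"
proof -
  define S where "S N = (\<Sum>n=1..N. F_fun q a e b n)" for N
  define G where "G t = psi_ap t q a - t / real (totient q) + e / real (totient q) * (t powr b / b)" for t
  define E where "E = (1 + \<bar>e\<bar> / b) / real (totient q)"
  have "J_fun q a e b X h = integral {0..h} (\<lambda>x. (\<Sum>n=1..nat \<lfloor>x\<rfloor>. F_fun q a e b n * exp (- real n / X))\<^sup>2)"
    unfolding J_fun_def nat_le_real_set_eq_atLeastAtMost_floor by simp
  also have "\<dots> \<le> 4 * integral {0..h} (\<lambda>x. (S (nat \<lfloor>x\<rfloor>))\<^sup>2)"
    unfolding S_def by (rule integral_smoothed_partial_sums_sq_le[OF X h])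
  also have "integral {0..h} (\<lambda>x. (S (nat \<lfloor>x\<rfloor>))\<^sup>2) \<le> 2 * integral {0..h} (\<lambda>x. (G x)\<^sup>2) + 2 * E\<^sup>2 * (h - 0)"
  proof (rule integral_floor_step_sq_le_approx)
    have "(\<lambda>t. psi_ap t q a) \<in> borel_measurable borel"
      unfolding psi_ap_eq_sum by (rule borel_measurable_floor_step)
    then show "G \<in> borel_measurable borel" unfolding G_def by measurable
    show "\<bar>S (nat \<lfloor>x\<rfloor>) - G x\<bar> \<le> E" if "x \<in> {0..h}" for x
      using abs_sum_F_fun_sub_le[of x e b q a] that eb unfolding S_def G_def E_def by simp
  qed (use h in simp)
  also have "integral {0..h} (\<lambda>x. (G x)\<^sup>2) = H_fun q a e b h"
    unfolding H_fun_def G_def ..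
  finally show ?thesis unfolding E_def by simp
qed

lemma J_fun_le_uniform:
  assumes X: "0 < X" and h: "0 \<le> h" "h \<le> X" and b0: "0 < b0"
    and eb: "e = 0 \<or> (\<bar>e\<bar> \<le> 1 \<and> b0 \<le> b \<and> b \<le> 1)"
  shows "J_fun q a e b X h \<le> 8 * (1 + 1 / b0)\<^sup>2 * (H_fun q a e b h + h / (real (totient q))\<^sup>2)"
proof -
  define K where "K = 1 + 1 / b0"
  have "0 \<le> 1 + \<bar>e\<bar> / b" "1 + \<bar>e\<bar> / b \<le> K"
    using eb b0 unfolding K_def by (auto simp: frac_le)
  then have "(1 + \<bar>e\<bar> / b)\<^sup>2 * (h / (real (totient q))\<^sup>2) \<le> K\<^sup>2 * (h / (real (totient q))\<^sup>2)"
    using h by (intro mult_right_mono power_mono) auto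
  then have "((1 + \<bar>e\<bar> / b) / real (totient q))\<^sup>2 * h \<le> K\<^sup>2 * (h / (real (totient q))\<^sup>2)"
    by (simp add: power_divide)
  moreover have "H_fun q a e b h \<le> K\<^sup>2 * H_fun q a e b h"
    using H_fun_nonneg[of q a e b h] mult_right_mono[of 1 "K\<^sup>2" "H_fun q a e b h"] b0
    unfolding K_def by simp
  moreover have "J_fun q a e b X h \<le> 8 * H_fun q a e b h + 8 * ((1 + \<bar>e\<bar> / b) / real (totient q))\<^sup>2 * h"
    using X h eb b0 by (intro J_fun_le) auto
  ultimately have "J_fun q a e b X h \<le> 8 * (K\<^sup>2 * H_fun q a e b h) + 8 * (K\<^sup>2 * (h / (real (totient q))\<^sup>2))"
    by linarith
  then show ?thesis unfolding K_def[symmetric] by (simp only: distrib_left mult.assoc)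
qed

theorem lemma4p2:
  assumes "c > 0"
  shows "\<exists>C>0. \<forall>(q::nat) (a::nat) (X::real) (h::real) (e::real) (b::real).
     q \<ge> 1 \<longrightarrow> coprime a q \<longrightarrow> X \<ge> 2 \<longrightarrow> 1 \<le> h \<longrightarrow> h \<le> X \<longrightarrow>
     ((\<exists>chi. siegel_zero c q chi b \<and> e = chi a) \<or>
      ((\<nexists>chi \<beta>. siegel_zero c q chi \<beta>) \<and> e = 0)) \<longrightarrow>
     J_fun q a e b X h \<le> C * (H_fun q a e b h + h / (real (totient q))\<^sup>2)"
proof -
  obtain b0 where b0: "b0 > 0" and siegel: "\<forall>q chi b. siegel_zero c q chi b \<longrightarrow> b0 \<le> b \<and> b < 1"
    using siegel_zero_lower_bound[OF assms] by blast
  show ?thesis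
  proof (intro exI[of _ "8 * (1 + 1 / b0)\<^sup>2"] conjI allI impI)
    have "0 < 1 + 1 / b0" using b0 by (intro add_pos_pos) auto
    then show "8 * (1 + 1 / b0)\<^sup>2 > 0" by simp
    fix q a :: nat and X h e b :: real
    assume "q \<ge> 1" "coprime a q" "X \<ge> 2" "1 \<le> h" "h \<le> X"
      and "(\<exists>chi. siegel_zero c q chi b \<and> e = chi a) \<or> ((\<nexists>chi \<beta>. siegel_zero c q chi \<beta>) \<and> e = 0)"
    then have "e = 0 \<or> (\<bar>e\<bar> \<le> 1 \<and> b0 \<le> b \<and> b \<le> 1)"
      using siegel abs_dirichlet_char_le_1 unfolding siegel_zero_def by (meson less_imp_le)
    then show "J_fun q a e b X h \<le> 8 * (1 + 1 / b0)\<^sup>2 * (H_fun q a e b h + h / (real (totient q))\<^sup>2)"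
      using \<open>X \<ge> 2\<close> \<open>1 \<le> h\<close> \<open>h \<le> X\<close> b0 by (intro J_fun_le_uniform) auto
  qed
qed

end
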